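(* Let $p>0$ and let $u:\mathbb{R}^4\to\mathbb{R}$ be a measurable function such that $(1-|y|^p)e^{4u}\in L^1(\mathbb{R}^4)$. Then for every $x\in\mathbb{R}^4$, $$\frac{1}{|B_r(x)|}\int_{B_r(x)}u^+\,dy\to 0\quad\text{as } r\to+\infty.$$
   Context: $u^+=\max(u,0)$; $B_r(x)$ is the ball of radius $r$ centered at $x$ and $|B_r(x)|$ its Lebesgue measure. *)

theory Defs
  imports "HOL-Analysis.Analysis"
begin

end

(* Off the ball |y| <= 2 powr (1/p) the weight satisfies |1 - |y|^p| >= 1, and u^+ <= e^(4u);
   so there u^+ is dominated by the integrable function |(1 - |y|^p) e^(4u)|.  Hence the integral
   of u^+ over B_r(x) stays bounded as r -> oo, while |B_r(x)| grows like r^4.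
   When u^+ is not integrable over B_r(x) its Bochner integral is 0 by convention, so the bound
   holds trivially. *)

theory Submission
  imports Defs
begin

lemma set_integral_nonneg:
  fixes f :: "'a \<Rightarrow> real"
  assumes "\<And>y. y \<in> S \<Longrightarrow> 0 \<le> f y"
  shows "0 \<le> (\<integral>y\<in>S. f y \<partial>M)"
  unfolding set_lebesgue_integral_def
  by (rule Bochner_Integration.integral_nonneg) (simp add: assms indicator_def)

lemma set_integral_le_if_dominated_outside:
  fixes f g :: "'a \<Rightarrow> real"
  assumes g: "integrable M g" and A: "A \<in> sets M" "A \<subseteq> S"
    and f_nonneg: "\<And>y. 0 \<le> f y" and dominated: "\<And>y. y \<notin> A \<Longrightarrow> f y \<le> \<bar>g y\<bar>"
  shows "(\<integral>y\<in>S. f y \<partial>M) \<le> (\<integral>y\<in>A. f y \<partial>M) + (\<integral>y. \<bar>g y\<bar> \<partial>M)"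
proof (cases "set_integrable M S f")
  case True
  then have fA: "set_integrable M A f"
    using A by (rule set_integrable_subset)
  have "(\<integral>y\<in>S. f y \<partial>M) \<le> (\<integral>y. indicator A y * f y + \<bar>g y\<bar> \<partial>M)"
    unfolding set_lebesgue_integral_def
  proof (rule integral_mono)
    show "integrable M (\<lambda>y. indicator S y *\<^sub>R f y)"
      using True by (simp add: set_integrable_def)
    show "integrable M (\<lambda>y. indicator A y * f y + \<bar>g y\<bar>)"
      using fA g by (simp add: set_integrable_def)
    show "indicator S y *\<^sub>R f y \<le> indicator A y * f y + \<bar>g y\<bar>" for y
      using A(2) dominated[of y] f_nonneg[of y]
      by (cases "y \<in> A"; cases "y \<in> S") auto
  qed
  also have "\<dots> = (\<integral>y\<in>A. f y \<partial>M) + (\<integral>y. \<bar>g y\<bar> \<partial>M)"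
    using fA g by (simp add: set_integrable_def set_lebesgue_integral_def)
  finally show ?thesis .
next
  case False
  then have "(\<integral>y\<in>S. f y \<partial>M) = 0"
    by (simp add: set_integrable_def set_lebesgue_integral_def not_integrable_integral_eq)
  moreover have "0 \<le> (\<integral>y\<in>A. f y \<partial>M)"
    using f_nonneg by (rule set_integral_nonneg)
  ultimately show ?thesis by simp
qed

lemma measure_lebesgue_ball:
  fixes x :: "'a::euclidean_space"
  assumes "0 \<le> r"
  shows "measure lebesgue (ball x r) = unit_ball_vol DIM('a) * r ^ DIM('a)"
  using content_ball[OF assms] by simp

lemma ball_average_tendsto_0_if_bounded:
  fixes f :: "'a::euclidean_space \<Rightarrow> real"
  assumes "\<forall>\<^sub>F r in at_top. \<bar>\<integral>y\<in>ball x r. f y \<partial>lebesgue\<bar> \<le> C"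
  shows "((\<lambda>r. (1 / measure lebesgue (ball x r)) * (\<integral>y\<in>ball x r. f y \<partial>lebesgue)) \<longlongrightarrow> 0) at_top"
proof (rule Lim_null_comparison)
  define K where "K = unit_ball_vol DIM('a)"
  have K: "0 < K" by (simp add: K_def)
  show "\<forall>\<^sub>F r in at_top. norm ((1 / measure lebesgue (ball x r)) * (\<integral>y\<in>ball x r. f y \<partial>lebesgue))
          \<le> C / (K * r ^ DIM('a))"
    using assms eventually_gt_at_top[of 0]
  proof eventually_elim
    case (elim r)
    then have "measure lebesgue (ball x r) = K * r ^ DIM('a)"
      unfolding K_def using elim by (intro measure_lebesgue_ball) simp
    with elim K show ?case
      by (simp add: abs_mult divide_right_mono)
  qed
  have "filterlim (\<lambda>r::real. K * r ^ DIM('a)) at_top at_top"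
    using K by (intro filterlim_tendsto_pos_mult_at_top[OF tendsto_const] filterlim_pow_at_top filterlim_ident) auto
  then show "((\<lambda>r. C / (K * r ^ DIM('a))) \<longlongrightarrow> 0) at_top"
    by (intro tendsto_divide_0[OF tendsto_const] filterlim_at_top_imp_at_infinity)
qed

lemma pos_part_le_weighted_exp:
  fixes t w :: real
  assumes "2 \<le> w"
  shows "max t 0 \<le> \<bar>(1 - w) * exp (4 * t)\<bar>"
proof -
  have "max t 0 \<le> exp (4 * t)"
    using exp_ge_add_one_self[of "4 * t"] exp_gt_zero[of "4 * t"] by linarith
  also have "\<dots> \<le> \<bar>1 - w\<bar> * exp (4 * t)"
    using assms by simp
  finally show ?thesis
    by (simp add: abs_mult)
qed

theorem lemma3p3:
  fixes u :: "real^4 \<Rightarrow> real" and p :: real and x :: "real^4"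
  assumes "p > 0"
    and "u \<in> borel_measurable lebesgue"
    and "integrable lebesgue (\<lambda>y. (1 - norm y powr p) * exp (4 * u y))"
  shows "((\<lambda>r. (1 / measure lebesgue (ball x r)) *
            (\<integral>y\<in>ball x r. max (u y) 0 \<partial>lebesgue)) \<longlongrightarrow> 0) at_top"
proof (rule ball_average_tendsto_0_if_bounded)
  define R where "R = 2 powr (1 / p)"
  define C where "C = (\<integral>y\<in>cball 0 R. max (u y) 0 \<partial>lebesgue)
    + (\<integral>y. \<bar>(1 - norm y powr p) * exp (4 * u y)\<bar> \<partial>lebesgue)"
  have dominated: "max (u y) 0 \<le> \<bar>(1 - norm y powr p) * exp (4 * u y)\<bar>"
    if "y \<notin> cball 0 R" for y
  proof (rule pos_part_le_weighted_exp)
    have "R powr p \<le> norm y powr p"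
      using that \<open>p > 0\<close> by (simp add: R_def powr_mono2)
    then show "2 \<le> norm y powr p"
      using \<open>p > 0\<close> by (simp add: R_def powr_powr)
  qed
  show "\<forall>\<^sub>F r in at_top. \<bar>\<integral>y\<in>ball x r. max (u y) 0 \<partial>lebesgue\<bar> \<le> C"
    using eventually_gt_at_top[of "R + norm x"]
  proof eventually_elim
    case (elim r)
    then have "cball 0 R \<subseteq> ball x r"
      by (auto simp: subset_eq dist_norm intro: le_less_trans[OF norm_triangle_ineq4])
    then have "(\<integral>y\<in>ball x r. max (u y) 0 \<partial>lebesgue) \<le> C"
      unfolding C_def using assms(3) dominated
      by (intro set_integral_le_if_dominated_outside) auto
    moreover have "0 \<le> (\<integral>y\<in>ball x r. max (u y) 0 \<partial>lebesgue)"
      by (rule set_integral_nonneg) simp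
    ultimately show ?case
      by simp
  qed
qed

end
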